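(* Let $W(x_1,\dots,x_n)$ be an invertible, non-degenerate, quasi-homogeneous polynomial with $2\sum_jw_j=d$, let $J_W^2\in G\subseteq\operatorname{SL}_W$, $V=x_0^2+W$, $J_V=\sigma J_W$, and $\mathcal H=\mathcal H_{G[\sigma,J_W]}(V)^{G[J_V]}$. For $L\in\{G,\sigma G,J_WG,J_VG\}$ set $[\mathcal H]_L=\bigoplus_{g\in L}\operatorname{Jac}(V_g)^{G[J_V]}$. Then $\mathcal H=[\mathcal H]_G\oplus[\mathcal H]_{\sigma G}\oplus[\mathcal H]_{J_WG}\oplus[\mathcal H]_{J_VG}$, where $[\mathcal H]_G\oplus[\mathcal H]_{J_VG}$ is $\mathbb Z\times\mathbb Z$-graded and $[\mathcal H]_{\sigma G}\oplus[\mathcal H]_{J_WG}$ is $(\tfrac12+\mathbb Z)\times(\tfrac12+\mathbb Z)$-graded.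
   Context: $W=\sum_i\prod_jx_j^{m_{i,j}}$ with invertible exponent matrix, weights $w_j$, degree $d$, non-degenerate. $\operatorname{Aut}_W$: diagonal symmetries; $\operatorname{SL}_W=\operatorname{Aut}_W\cap\operatorname{SL}(n;\mathbb C)$; $J_W=(e^{2\pi iw_j/d})_j$, regarded as a symmetry of $V$ fixing $x_0$ (as is $G$); $\sigma=(-1,1,\dots,1)$ on $(x_0,\dots,x_n)$; $V$ has weights $(d/2,w_1,\dots,w_n)$ and degree $d$, and $J_V=\sigma J_W$ is its grading element. $L[h]$ is the group generated by $L$ and $h$. For $g$ a diagonal symmetry of $V$, $F_g$ is the set of indices of $g$-fixed coordinates, $V_g$ the restriction, $\operatorname{Jac}(V_g)=\mathbb C[x_j:j\in F_g]/(\partial_jV_g)\cdot\bigwedge_{j\in F_g}dx_j$; $\mathcal H_S(V)^K=\bigoplus_{g\in S}\operatorname{Jac}(V_g)^K$, where $h=\frac1D(p_0,\dots,p_n)$ acts on $\prod x_j^{a_j}\bigwedge dx_j$ by $e^{2\pi i\sum_{j\in F_g}(a_j+1)p_j/D}$. Bi-degree of that form: $(\#F_g-\deg+\operatorname{a}(g),\deg+\operatorname{a}(g))$, $\deg=\sum_{j\in F_g}(a_j+1)w_j/d$ (with $w_0=d/2$), $\operatorname{a}(g)=\sum_jp_j/D$, $0\le p_j<D$. *)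

theory Defs
  imports "HOL-Analysis.Analysis"
begin

text \<open>Coordinates x_0, x_1, ..., x_n are indexed by naturals; W lives on x_1..x_n.
  A diagonal transformation of C^(n+1) is a function g :: nat => complex with nonzero
  entries and g j = 1 for j > n (canonical representative).\<close>

definition diag :: "nat \<Rightarrow> (nat \<Rightarrow> complex) set" where
  "diag n = {g. (\<forall>j. g j \<noteq> 0) \<and> (\<forall>j>n. g j = 1)}"

definition dmul :: "(nat \<Rightarrow> complex) \<Rightarrow> (nat \<Rightarrow> complex) \<Rightarrow> nat \<Rightarrow> complex" where
  "dmul g h = (\<lambda>j. g j * h j)"

definition dinv :: "(nat \<Rightarrow> complex) \<Rightarrow> nat \<Rightarrow> complex" where
  "dinv g = (\<lambda>j. inverse (g j))"

definition did :: "nat \<Rightarrow> complex" where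
  "did = (\<lambda>j. 1)"

definition dsubgroup :: "nat \<Rightarrow> (nat \<Rightarrow> complex) set \<Rightarrow> bool" where
  "dsubgroup n H \<longleftrightarrow> H \<subseteq> diag n \<and> did \<in> H \<and>
     (\<forall>g\<in>H. \<forall>h\<in>H. dmul g h \<in> H) \<and> (\<forall>g\<in>H. dinv g \<in> H)"

text \<open>Group generated by a set S of diagonal transformations (e.g. L[h] = dgen n (L \<union> {h})).\<close>
definition dgen :: "nat \<Rightarrow> (nat \<Rightarrow> complex) set \<Rightarrow> (nat \<Rightarrow> complex) set" where
  "dgen n S = \<Inter> {H. dsubgroup n H \<and> S \<subseteq> H}"

definition Wpoly :: "nat \<Rightarrow> (nat \<Rightarrow> nat \<Rightarrow> nat) \<Rightarrow> (nat \<Rightarrow> complex) \<Rightarrow> complex" where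
  "Wpoly n M x = (\<Sum>i=1..n. \<Prod>j=1..n. x j ^ M i j)"

definition dWpoly :: "nat \<Rightarrow> (nat \<Rightarrow> nat \<Rightarrow> nat) \<Rightarrow> nat \<Rightarrow> (nat \<Rightarrow> complex) \<Rightarrow> complex" where
  "dWpoly n M k x = (\<Sum>i=1..n. of_nat (M i k) * x k ^ (M i k - 1) *
                         (\<Prod>j\<in>{1..n}-{k}. x j ^ M i j))"

definition exp_det :: "nat \<Rightarrow> (nat \<Rightarrow> nat \<Rightarrow> nat) \<Rightarrow> int" where
  "exp_det n M = (\<Sum>p | p permutes {1..n}. sign p * (\<Prod>i=1..n. int (M i (p i))))"

definition invertible_qh :: "nat \<Rightarrow> (nat \<Rightarrow> nat \<Rightarrow> nat) \<Rightarrow> (nat \<Rightarrow> nat) \<Rightarrow> nat \<Rightarrow> bool" where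
  "invertible_qh n M w d \<longleftrightarrow> n \<ge> 1 \<and> d > 0 \<and> (\<forall>j\<in>{1..n}. w j > 0) \<and>
     exp_det n M \<noteq> 0 \<and> (\<forall>i\<in>{1..n}. (\<Sum>j=1..n. M i j * w j) = d)"

definition nondegenerate :: "nat \<Rightarrow> (nat \<Rightarrow> nat \<Rightarrow> nat) \<Rightarrow> bool" where
  "nondegenerate n M \<longleftrightarrow>
     (\<forall>x::nat \<Rightarrow> complex. (\<forall>k\<in>{1..n}. dWpoly n M k x = 0) \<longrightarrow> (\<forall>j\<in>{1..n}. x j = 0))"

text \<open>Diagonal symmetries of W, regarded as symmetries of V fixing x_0.\<close>
definition AutW :: "nat \<Rightarrow> (nat \<Rightarrow> nat \<Rightarrow> nat) \<Rightarrow> (nat \<Rightarrow> complex) set" where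
  "AutW n M = {g \<in> diag n. g 0 = 1 \<and> (\<forall>x. Wpoly n M (\<lambda>j. g j * x j) = Wpoly n M x)}"

definition SLW :: "nat \<Rightarrow> (nat \<Rightarrow> nat \<Rightarrow> nat) \<Rightarrow> (nat \<Rightarrow> complex) set" where
  "SLW n M = {g \<in> AutW n M. (\<Prod>j=1..n. g j) = 1}"

definition JW :: "nat \<Rightarrow> (nat \<Rightarrow> nat) \<Rightarrow> nat \<Rightarrow> nat \<Rightarrow> complex" where
  "JW n w d = (\<lambda>j. if 1 \<le> j \<and> j \<le> n then exp (2 * pi * \<i> * of_nat (w j) / of_nat d) else 1)"

definition sigma :: "nat \<Rightarrow> complex" where
  "sigma = (\<lambda>j. if j = 0 then -1 else 1)"

definition JV :: "nat \<Rightarrow> (nat \<Rightarrow> nat) \<Rightarrow> nat \<Rightarrow> nat \<Rightarrow> complex" where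
  "JV n w d = dmul sigma (JW n w d)"

definition Fix :: "nat \<Rightarrow> (nat \<Rightarrow> complex) \<Rightarrow> nat set" where
  "Fix n g = {j \<in> {0..n}. g j = 1}"

definition phase :: "complex \<Rightarrow> real" where
  "phase z = frac (Arg z / (2 * pi))"

definition age :: "nat \<Rightarrow> (nat \<Rightarrow> complex) \<Rightarrow> real" where
  "age n g = (\<Sum>j=0..n. phase (g j))"

definition wV :: "(nat \<Rightarrow> nat) \<Rightarrow> nat \<Rightarrow> nat \<Rightarrow> real" where
  "wV w d j = (if j = 0 then real d / 2 else real (w j))"

text \<open>The form prod_{j in F_g} x_j^(a_j) /\ dx_j in the g-sector, with exponents a.\<close>
definition fdeg :: "nat \<Rightarrow> (nat \<Rightarrow> nat) \<Rightarrow> nat \<Rightarrow> (nat \<Rightarrow> complex) \<Rightarrow> (nat \<Rightarrow> nat) \<Rightarrow> real" where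
  "fdeg n w d g a = (\<Sum>j\<in>Fix n g. real (a j + 1) * wV w d j / real d)"

definition bideg :: "nat \<Rightarrow> (nat \<Rightarrow> nat) \<Rightarrow> nat \<Rightarrow> (nat \<Rightarrow> complex) \<Rightarrow> (nat \<Rightarrow> nat) \<Rightarrow> real \<times> real" where
  "bideg n w d g a = (real (card (Fix n g)) - fdeg n w d g a + age n g,
                      fdeg n w d g a + age n g)"

text \<open>h acts on the form by prod_{j in F_g} h_j^(a_j+1) = exp(2 pi i sum (a_j+1) p_j/D).\<close>
definition form_invariant :: "nat \<Rightarrow> (nat \<Rightarrow> complex) set \<Rightarrow> (nat \<Rightarrow> complex) \<Rightarrow> (nat \<Rightarrow> nat) \<Rightarrow> bool" where
  "form_invariant n K g a \<longleftrightarrow> (\<forall>h\<in>K. (\<Prod>j\<in>Fix n g. h j ^ (a j + 1)) = 1)"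

definition half_int :: "real set" where
  "half_int = {x. x - 1/2 \<in> \<int>}"

end

theory Submission
  imports Defs
begin

text \<open>The symmetries \<sigma> and J_W square into G, so G[\<sigma>, J_W] is the union of the four cosets
  G, \<sigma>G, J_W G, J_V G. Every element g of G fixes x_0 and has determinant 1, hence a coset
  c G is labelled by the pair (c_0, det c), which is (1,1), (-1,-1), (1,-1), (-1,1) for the four
  cosets (det J_W = -1 because \<Sum> w_j = d/2); so the cosets are pairwise disjoint.
  For the grading: invariance of a form under J_V forces its degree to be an integer, since
  J_V acts on it by exp(2\<pi>i deg); and exp(2\<pi>i age(g)) = det g, so the age is an integer
  when det g = 1 and a half-integer when det g = -1.\<close>

definition e2pi :: "real \<Rightarrow> complex" where
  "e2pi x = exp (2 * pi * \<i> * complex_of_real x)"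

definition ddet :: "nat \<Rightarrow> (nat \<Rightarrow> complex) \<Rightarrow> complex" where
  "ddet n g = (\<Prod>j=0..n. g j)"

lemma e2pi_add: "e2pi (x + y) = e2pi x * e2pi y"
  unfolding e2pi_def by (simp add: distrib_left exp_add)

lemma e2pi_0 [simp]: "e2pi 0 = 1"
  unfolding e2pi_def by simp

lemma e2pi_half: "e2pi (1/2) = -1"
  unfolding e2pi_def by simp

lemma e2pi_of_int [simp]: "e2pi (of_int k) = 1"
proof -
  have "2 * pi * \<i> * complex_of_real (of_int k) = \<i> * (complex_of_int k * (complex_of_real pi * 2))"
    by simp
  then show ?thesis
    unfolding e2pi_def using exp_2pi_1_int by metis
qed

lemma e2pi_eq_1_imp_Ints:
  assumes "e2pi x = 1"
  shows "x \<in> \<int>"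
proof -
  obtain k where "Im (2 * pi * \<i> * complex_of_real x) = real_of_int (2 * k) * pi"
    using assms unfolding e2pi_def exp_eq_1 by blast
  then have "x = of_int k"
    by simp
  then show ?thesis
    by simp
qed

lemma e2pi_sum: "e2pi (\<Sum>j\<in>A. f j) = (\<Prod>j\<in>A. e2pi (f j))"
  by (induction A rule: infinite_finite_induct) (simp_all add: e2pi_add)

lemma e2pi_power: "e2pi x ^ k = e2pi (real k * x)"
  unfolding e2pi_def
  by (metis exp_of_nat_mult mult.commute mult.left_commute of_real_mult of_real_of_nat_eq)

lemma norm_e2pi [simp]: "norm (e2pi x) = 1"
  unfolding e2pi_def
  by (metis mult.commute mult.left_commute norm_exp_i_times of_real_mult of_real_numeral)

lemma e2pi_frac: "e2pi (frac x) = e2pi x"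
proof -
  have "e2pi x = e2pi (frac x + of_int \<lfloor>x\<rfloor>)"
    by (simp add: frac_def)
  then show ?thesis
    by (simp add: e2pi_add)
qed

lemma polar_e2pi_phase:
  assumes "z \<noteq> 0"
  shows "z = complex_of_real (norm z) * e2pi (phase z)"
proof -
  have "e2pi (phase z) = e2pi (Arg z / (2 * pi))"
    unfolding phase_def by (rule e2pi_frac)
  also have "\<dots> = exp (\<i> * complex_of_real (Arg z))"
    unfolding e2pi_def by (simp add: field_simps)
  finally show ?thesis
    using Arg_eq[OF assms] by simp
qed

lemma e2pi_age:
  assumes nonzero: "\<forall>j. g j \<noteq> 0" and unimodular: "norm (ddet n g) = 1"
  shows "e2pi (age n g) = ddet n g"
proof -
  have "ddet n g = (\<Prod>j=0..n. complex_of_real (norm (g j)) * e2pi (phase (g j)))"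
    unfolding ddet_def using polar_e2pi_phase nonzero by (metis (no_types, lifting) prod.cong)
  also have "\<dots> = complex_of_real (\<Prod>j=0..n. norm (g j)) * e2pi (age n g)"
    unfolding age_def e2pi_sum prod.distrib by simp
  finally have polar: "ddet n g = complex_of_real (\<Prod>j=0..n. norm (g j)) * e2pi (age n g)" .
  then have "(\<Prod>j=0..n. norm (g j)) = 1"
    using unimodular by (simp del: of_real_prod add: norm_mult prod_nonneg)
  with polar show ?thesis
    by (simp del: of_real_prod)
qed

lemma dmul_assoc: "dmul (dmul a b) c = dmul a (dmul b c)"
  by (simp add: dmul_def mult.assoc)

lemma dmul_commute: "dmul a b = dmul b a"
  by (simp add: dmul_def mult.commute)

lemma dmul_did [simp]: "dmul did a = a" "dmul a did = a"
  by (simp_all add: dmul_def did_def)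

lemma dmul_in_diag: "a \<in> diag n \<Longrightarrow> b \<in> diag n \<Longrightarrow> dmul a b \<in> diag n"
  by (simp add: dmul_def diag_def)

lemma dmul_apply_0: "dmul a b 0 = a 0 * b 0"
  by (simp add: dmul_def)

lemma ddet_dmul: "ddet n (dmul a b) = ddet n a * ddet n b"
  by (simp add: ddet_def dmul_def prod.distrib)

lemma ddet_split_first: "ddet n g = g 0 * (\<Prod>j=1..n. g j)"
  unfolding ddet_def using prod.atLeast_Suc_atMost[of 0 n g] by simp

lemma sigma_in_diag: "sigma \<in> diag n"
  by (simp add: sigma_def diag_def)

lemma sigma_square: "dmul sigma sigma = did"
  by (simp add: dmul_def sigma_def did_def fun_eq_iff)

lemma ddet_sigma: "ddet n sigma = -1"
  by (simp add: ddet_split_first sigma_def)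

lemma JW_in_diag: "JW n w d \<in> diag n"
  by (simp add: JW_def diag_def)

lemma JW_apply_0: "JW n w d 0 = 1"
  by (simp add: JW_def)

lemma JW_eq_e2pi: "1 \<le> j \<Longrightarrow> j \<le> n \<Longrightarrow> JW n w d j = e2pi (real (w j) / real d)"
  unfolding JW_def e2pi_def by (simp add: mult.assoc)

lemma ddet_JW:
  assumes "d > 0" and "2 * (\<Sum>j=1..n. w j) = d"
  shows "ddet n (JW n w d) = -1"
proof -
  have d_eq: "real d = 2 * (\<Sum>j=1..n. real (w j))"
    using assms(2) by (metis of_nat_mult of_nat_numeral of_nat_sum)
  have "ddet n (JW n w d) = e2pi (\<Sum>j=1..n. real (w j) / real d)"
    by (simp add: ddet_split_first JW_apply_0 JW_eq_e2pi e2pi_sum)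
  also have "(\<Sum>j=1..n. real (w j) / real d) = 1/2"
    using d_eq assms(1) by (simp add: sum_divide_distrib[symmetric])
  finally show ?thesis
    by (simp add: e2pi_half)
qed

lemma JV_eq_e2pi:
  assumes "d > 0" and "j \<le> n"
  shows "JV n w d j = e2pi (wV w d j / real d)"
  using assms JW_eq_e2pi[of j n w d]
  by (cases "j = 0") (simp_all add: JV_def dmul_def sigma_def JW_def wV_def e2pi_half)

lemma SLW_apply_0_ddet: "g \<in> SLW n M \<Longrightarrow> g 0 = 1 \<and> ddet n g = 1"
  unfolding SLW_def AutW_def by (simp add: ddet_split_first)

lemma dgen_inc: "x \<in> S \<Longrightarrow> x \<in> dgen n S"
  unfolding dgen_def by blast

lemma dgen_Un_dgen: "dgen n (dgen n S \<union> T) = dgen n (S \<union> T)"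
  unfolding dgen_def by blast

lemma dsubgroup_Un_coset:
  assumes H: "dsubgroup n H" and t: "t \<in> diag n" and tt: "dmul t t \<in> H"
  shows "dsubgroup n (H \<union> dmul t ` H)"
proof -
  have Hd: "H \<subseteq> diag n" and Hid: "did \<in> H"
    and Hmul: "\<And>g h. g \<in> H \<Longrightarrow> h \<in> H \<Longrightarrow> dmul g h \<in> H"
    and Hinv: "\<And>g. g \<in> H \<Longrightarrow> dinv g \<in> H"
    using H unfolding dsubgroup_def by auto
  have mul_coset: "dmul (dmul t g) (dmul t h) = dmul (dmul t t) (dmul g h)" for g h
    by (simp add: dmul_def mult_ac)
  have inv_coset: "dinv (dmul t g) = dmul t (dmul (dinv (dmul t t)) (dinv g))" for g
    using t by (auto simp: dinv_def dmul_def diag_def fun_eq_iff field_simps)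
  show ?thesis
    unfolding dsubgroup_def
  proof (intro conjI ballI)
    show "H \<union> dmul t ` H \<subseteq> diag n"
      using Hd t dmul_in_diag by blast
    show "did \<in> H \<union> dmul t ` H"
      using Hid by simp
  next
    fix x y assume x: "x \<in> H \<union> dmul t ` H" and y: "y \<in> H \<union> dmul t ` H"
    show "dmul x y \<in> H \<union> dmul t ` H"
    proof (cases "x \<in> H"; cases "y \<in> H")
      assume "x \<in> H" "y \<in> H"
      then show ?thesis
        using Hmul by blast
    next
      assume "x \<in> H" "y \<notin> H"
      then obtain h where "h \<in> H" "y = dmul t h"
        using y by blast
      then have "dmul x y = dmul t (dmul x h)"
        by (metis dmul_assoc dmul_commute)
      then show ?thesis
        using Hmul \<open>x \<in> H\<close> \<open>h \<in> H\<close> by blast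
    next
      assume "x \<notin> H" "y \<in> H"
      then obtain g where "g \<in> H" "x = dmul t g"
        using x by blast
      then have "dmul x y = dmul t (dmul g y)"
        by (simp add: dmul_assoc)
      then show ?thesis
        using Hmul \<open>g \<in> H\<close> \<open>y \<in> H\<close> by blast
    next
      assume "x \<notin> H" "y \<notin> H"
      then obtain g h where "g \<in> H" "x = dmul t g" "h \<in> H" "y = dmul t h"
        using x y by blast
      then show ?thesis
        using Hmul tt mul_coset by simp
    qed
  next
    fix x assume "x \<in> H \<union> dmul t ` H"
    then consider "x \<in> H" | g where "g \<in> H" "x = dmul t g"
      by blast
    then show "dinv x \<in> H \<union> dmul t ` H"
    proof cases
      case 1
      then show ?thesis
        using Hinv by blast
    next
      case 2
      then show ?thesis
        using Hinv Hmul tt inv_coset by (metis UnI2 image_eqI)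
    qed
  qed
qed

lemma dgen_insert_square:
  assumes H: "dsubgroup n H" and t: "t \<in> diag n" and tt: "dmul t t \<in> H"
  shows "dgen n (H \<union> {t}) = H \<union> dmul t ` H"
proof
  have "t \<in> dmul t ` H"
    using H unfolding dsubgroup_def by (metis dmul_did(2) imageI)
  then show "dgen n (H \<union> {t}) \<subseteq> H \<union> dmul t ` H"
    unfolding dgen_def using dsubgroup_Un_coset[OF assms] by blast
  have "dmul t h \<in> K" if "dsubgroup n K" "H \<union> {t} \<subseteq> K" "h \<in> H" for K h
    using that unfolding dsubgroup_def by blast
  then show "H \<union> dmul t ` H \<subseteq> dgen n (H \<union> {t})"
    unfolding dgen_def by blast
qed

lemma dgen_Un_two_squares:
  assumes H: "dsubgroup n H" and s: "s \<in> diag n" "dmul s s \<in> H" and t: "t \<in> diag n" "dmul t t \<in> H"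
  shows "dgen n (H \<union> {s, t}) = H \<union> dmul s ` H \<union> dmul t ` H \<union> dmul (dmul s t) ` H"
proof -
  have "dgen n (H \<union> {s, t}) = dgen n (dgen n (H \<union> {t}) \<union> {s})"
    by (metis dgen_Un_dgen Un_insert_right insert_commute sup_bot_right)
  also have "dgen n (H \<union> {t}) = H \<union> dmul t ` H"
    by (rule dgen_insert_square[OF H t])
  also have "dgen n ((H \<union> dmul t ` H) \<union> {s}) = (H \<union> dmul t ` H) \<union> dmul s ` (H \<union> dmul t ` H)"
    using s by (intro dgen_insert_square dsubgroup_Un_coset[OF H t]) simp_all
  also have "\<dots> = H \<union> dmul s ` H \<union> dmul t ` H \<union> dmul (dmul s t) ` H"
    by (auto simp: image_Un image_image dmul_assoc)
  finally show ?thesis .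
qed

lemma dmul_image_diag_ddet:
  assumes "\<forall>g\<in>G. ddet n g = 1" and "G \<subseteq> diag n" and "c \<in> diag n" and "x \<in> dmul c ` G"
  shows "x \<in> diag n \<and> ddet n x = ddet n c"
  using assms dmul_in_diag by (auto simp: ddet_dmul)

lemma dmul_images_disjoint:
  assumes G: "\<forall>g\<in>G. g 0 = 1 \<and> ddet n g = 1" and labels: "c 0 \<noteq> c' 0 \<or> ddet n c \<noteq> ddet n c'"
  shows "dmul c ` G \<inter> dmul c' ` G = {}"
proof -
  have False if "g \<in> G" "g' \<in> G" "dmul c g = dmul c' g'" for g g'
  proof -
    have "dmul c g 0 = dmul c' g' 0" and "ddet n (dmul c g) = ddet n (dmul c' g')"
      using that(3) by simp_all
    moreover have "g 0 = 1" "g' 0 = 1" "ddet n g = 1" "ddet n g' = 1"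
      using G that(1,2) by auto
    ultimately show False
      using labels by (simp add: dmul_apply_0 ddet_dmul)
  qed
  then show ?thesis
    by blast
qed

lemma Int_dmul_image_empty:
  assumes G: "\<forall>g\<in>G. g 0 = 1 \<and> ddet n g = 1" and labels: "c 0 \<noteq> 1 \<or> ddet n c \<noteq> 1"
  shows "G \<inter> dmul c ` G = {}"
proof -
  have "did 0 = 1" "ddet n did = 1"
    by (simp_all add: did_def ddet_def)
  then show ?thesis
    using dmul_images_disjoint[OF G, of did c] labels by simp
qed

lemma half_int_add_Ints:
  assumes "x \<in> half_int" and "k \<in> \<int>"
  shows "k + x \<in> half_int"
proof -
  have "k + (x - 1/2) \<in> \<int>"
    using assms unfolding half_int_def by (intro Ints_add) auto
  then show ?thesis
    unfolding half_int_def by (simp add: add_diff_eq)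
qed

lemma age_in_Ints: "g \<in> diag n \<Longrightarrow> ddet n g = 1 \<Longrightarrow> age n g \<in> \<int>"
  using e2pi_age[of g n] e2pi_eq_1_imp_Ints unfolding diag_def by simp

lemma age_in_half_int:
  assumes "g \<in> diag n" and "ddet n g = -1"
  shows "age n g \<in> half_int"
proof -
  have "e2pi (age n g) = -1"
    using assms e2pi_age[of g n] unfolding diag_def by simp
  then have "e2pi (age n g - 1/2) = 1"
    using e2pi_add[of "age n g - 1/2" "1/2"] by (simp add: e2pi_half)
  then have "age n g - 1/2 \<in> \<int>"
    by (rule e2pi_eq_1_imp_Ints)
  then show ?thesis
    by (simp add: half_int_def)
qed

lemma fdeg_in_Ints:
  assumes "d > 0" and "JV n w d \<in> K" and "form_invariant n K g a"
  shows "fdeg n w d g a \<in> \<int>"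
proof -
  have "e2pi (fdeg n w d g a) = (\<Prod>j\<in>Fix n g. e2pi (real (a j + 1) * (wV w d j / real d)))"
    unfolding fdeg_def e2pi_sum by simp
  also have "\<dots> = (\<Prod>j\<in>Fix n g. JV n w d j ^ (a j + 1))"
  proof (rule prod.cong)
    fix j assume "j \<in> Fix n g"
    then have "j \<le> n"
      by (simp add: Fix_def)
    then show "e2pi (real (a j + 1) * (wV w d j / real d)) = JV n w d j ^ (a j + 1)"
      by (simp only: JV_eq_e2pi[OF assms(1)] e2pi_power)
  qed simp
  also have "\<dots> = 1"
    using assms(2,3) unfolding form_invariant_def by blast
  finally show ?thesis
    by (rule e2pi_eq_1_imp_Ints)
qed

lemma bideg_in_Ints:
  assumes "g \<in> diag n" and "ddet n g = 1" and "fdeg n w d g a \<in> \<int>"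
  shows "fst (bideg n w d g a) \<in> \<int> \<and> snd (bideg n w d g a) \<in> \<int>"
  using assms age_in_Ints unfolding bideg_def by auto

lemma bideg_in_half_int:
  assumes "g \<in> diag n" and "ddet n g = -1" and "fdeg n w d g a \<in> \<int>"
  shows "fst (bideg n w d g a) \<in> half_int \<and> snd (bideg n w d g a) \<in> half_int"
proof -
  have "age n g \<in> half_int"
    using assms(1,2) by (rule age_in_half_int)
  then show ?thesis
    unfolding bideg_def using assms(3)
    by (simp add: half_int_add_Ints add_diff_eq[symmetric])
qed

theorem lemma5p7:
  fixes n d :: nat and M :: "nat \<Rightarrow> nat \<Rightarrow> nat" and w :: "nat \<Rightarrow> nat"
    and G :: "(nat \<Rightarrow> complex) set"
  assumes W: "invertible_qh n M w d" and nd: "nondegenerate n M"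
    and wsum: "2 * (\<Sum>j=1..n. w j) = d"
    and Gsub: "dsubgroup n G" and GSL: "G \<subseteq> SLW n M"
    and JW2: "dmul (JW n w d) (JW n w d) \<in> G"
  shows
    "dgen n (G \<union> {sigma, JW n w d}) =
       G \<union> dmul sigma ` G \<union> dmul (JW n w d) ` G \<union> dmul (JV n w d) ` G
     \<and> G \<inter> dmul sigma ` G = {} \<and> G \<inter> dmul (JW n w d) ` G = {}
     \<and> G \<inter> dmul (JV n w d) ` G = {} \<and> dmul sigma ` G \<inter> dmul (JW n w d) ` G = {}
     \<and> dmul sigma ` G \<inter> dmul (JV n w d) ` G = {}
     \<and> dmul (JW n w d) ` G \<inter> dmul (JV n w d) ` G = {}
     \<and> (\<forall>g \<in> G \<union> dmul (JV n w d) ` G. \<forall>a.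
          form_invariant n (dgen n (G \<union> {JV n w d})) g a \<longrightarrow>
          fst (bideg n w d g a) \<in> \<int> \<and> snd (bideg n w d g a) \<in> \<int>)
     \<and> (\<forall>g \<in> dmul sigma ` G \<union> dmul (JW n w d) ` G. \<forall>a.
          form_invariant n (dgen n (G \<union> {JV n w d})) g a \<longrightarrow>
          fst (bideg n w d g a) \<in> half_int \<and> snd (bideg n w d g a) \<in> half_int)"
proof -
  let ?J = "JW n w d" and ?V = "JV n w d"
  have d: "d > 0"
    using W unfolding invertible_qh_def by simp
  have G: "\<forall>g\<in>G. g 0 = 1 \<and> ddet n g = 1" and Gd: "G \<subseteq> diag n" and "did \<in> G"
    using GSL SLW_apply_0_ddet Gsub unfolding dsubgroup_def by auto
  then have cosets: "dgen n (G \<union> {sigma, ?J}) = G \<union> dmul sigma ` G \<union> dmul ?J ` G \<union> dmul ?V ` G"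
    unfolding JV_def by (intro dgen_Un_two_squares Gsub sigma_in_diag JW_in_diag JW2) (simp add: sigma_square)
  have labels: "sigma 0 = -1" "?J 0 = 1" "?V 0 = -1"
    "ddet n sigma = -1" "ddet n ?J = -1" "ddet n ?V = 1"
    by (simp_all add: JW_apply_0 JV_def dmul_apply_0 ddet_dmul ddet_sigma ddet_JW[OF d wsum])
      (simp_all add: sigma_def)
  have fdeg: "fdeg n w d g a \<in> \<int>" if "form_invariant n (dgen n (G \<union> {?V})) g a" for g a
    using fdeg_in_Ints[OF d _ that] dgen_inc by blast
  have V_diag: "?V \<in> diag n"
    unfolding JV_def by (rule dmul_in_diag[OF sigma_in_diag JW_in_diag])
  have "g \<in> diag n \<and> ddet n g = 1" if "g \<in> G \<union> dmul ?V ` G" for g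
    using that G Gd dmul_image_diag_ddet[OF _ Gd V_diag] labels(6) by auto
  then have integral: "\<forall>g \<in> G \<union> dmul ?V ` G. \<forall>a. form_invariant n (dgen n (G \<union> {?V})) g a \<longrightarrow>
      fst (bideg n w d g a) \<in> \<int> \<and> snd (bideg n w d g a) \<in> \<int>"
    using bideg_in_Ints fdeg by blast
  have "g \<in> diag n \<and> ddet n g = -1" if "g \<in> dmul sigma ` G \<union> dmul ?J ` G" for g
    using that G dmul_image_diag_ddet[OF _ Gd sigma_in_diag] dmul_image_diag_ddet[OF _ Gd JW_in_diag[of n w d]]
      labels(4,5) by auto
  then have half_integral: "\<forall>g \<in> dmul sigma ` G \<union> dmul ?J ` G. \<forall>a.
      form_invariant n (dgen n (G \<union> {?V})) g a \<longrightarrow>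
      fst (bideg n w d g a) \<in> half_int \<and> snd (bideg n w d g a) \<in> half_int"
    using bideg_in_half_int fdeg by blast
  have "G \<inter> dmul sigma ` G = {}" "G \<inter> dmul ?J ` G = {}" "G \<inter> dmul ?V ` G = {}"
      "dmul sigma ` G \<inter> dmul ?J ` G = {}" "dmul sigma ` G \<inter> dmul ?V ` G = {}"
      "dmul ?J ` G \<inter> dmul ?V ` G = {}"
    using Int_dmul_image_empty[OF G] dmul_images_disjoint[OF G] labels by simp_all
  then show ?thesis
    using cosets integral half_integral by (intro conjI) assumption+
qed

end
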